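(* Let $\Psi\in\Delta_7$ be a unit spinor, $\omega^3(X,Y,Z):=-\big(X\cdot Y\cdot Z\cdot\Psi,\Psi\big)$, and fix $(p,q)\in\mathbb{R}^2$. Call a pair $(\mathrm{T},\mathrm{F})$ with $\mathrm{T}\in\Lambda^3(\mathbb{R}^7)$, $\mathrm{F}\in\Lambda^4(\mathbb{R}^7)$ admissible if for all $X\in\mathbb{R}^7$ $$\Big(X+\tfrac14\,(X\lrcorner\mathrm{T})+p\,(X\lrcorner\mathrm{F})+q\,(X\wedge\mathrm{F})\Big)\cdot\Psi=0 .$$ Among pairs of the form $\mathrm{T}=a\,\omega^3$, $\mathrm{F}=f\,( *\omega^3)$ with $a,f\in\mathbb{R}$, the admissible ones form the $1$-parameter family $$\mathrm{T}=\Big[\frac{(12q-16p)\,f}{3}-\frac43\Big]\,\omega^3,\qquad \mathrm{F}=f\,( *\omega^3),\qquad f\in\mathbb{R}.$$ In particular, if $4p-3q=0$, the torsion form does not depend on the flux form: $\mathrm{T}=-\tfrac43\,\omega^3$ and $\mathrm{F}=f\,( *\omega^3)$.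
   Context: $\mathbb{R}^7$ carries the Euclidean metric; $\Delta_7$ is the real $8$-dimensional spin representation with $\mathrm{Spin}(7)$-invariant inner product $(\cdot,\cdot)$; Clifford multiplication satisfies $X\cdot X=-|X|^2$ and $k$-forms act by Clifford multiplication ($e_{i_1}\wedge\cdots\wedge e_{i_k}\mapsto e_{i_1}\cdots e_{i_k}$, distinct indices, orthonormal basis). One has $\omega^3\cdot\Psi=-7\Psi$. $*$ is the Hodge star for the orientation fixed by the realization of the spin representation, for which $( *\omega^3)\cdot\Psi=-7\Psi$. *)

theory Defs
  imports "HOL-Analysis.Analysis"
begin

text \<open>Vectors of R^7 are functions nat => real (components 0..6,
  the orthonormal basis e_0..e_6).  Spinors in Delta_7 = R^8 are functions nat => real
  (components 0..7).  A k-form on R^7 is a function nat list => real, read on lists of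
  length k (its components F(e_i1,...,e_ik)).\<close>

type_synonym vec7 = "nat \<Rightarrow> real"
type_synonym spinor = "nat \<Rightarrow> real"
type_synonym form = "nat list \<Rightarrow> real"

text \<open>Realization of Delta_7: octonions O = R^8 (basis 1 = e_0, e_1..e_7 imaginary
  units), Fano triples (1,2,3),(1,4,5),(1,7,6),(2,4,6),(2,5,7),(3,4,7),(3,6,5).\<close>

definition fano :: "(nat \<times> nat \<times> nat) set" where
  "fano = (\<Union>(a,b,c)\<in>{(1,2,3),(1,4,5),(1,7,6),(2,4,6),(2,5,7),(3,4,7),(3,6,5)}.
             {(a,b,c),(b,c,a),(c,a,b)})"

text \<open>Structure constants: e_i e_j = sum_k oct_c i j k e_k.\<close>
definition oct_c :: "nat \<Rightarrow> nat \<Rightarrow> nat \<Rightarrow> real" where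
  "oct_c i j k =
     (if i = 0 then (if j = k then 1 else 0)
      else if j = 0 then (if i = k then 1 else 0)
      else if i = j then (if k = 0 then -1 else 0)
      else if (i,j,k) \<in> fano then 1
      else if (j,i,k) \<in> fano then -1 else 0)"

text \<open>Clifford multiplication by the basis vector e_i of R^7 (i < 7):
  minus left octonion multiplication by e_(i+1).  This satisfies
  e_i e_j + e_j e_i = -2 delta_ij; the sign is chosen so that, with the standard
  orientation e_0 ^ ... ^ e_6, one has (*omega^3).Psi = -7 Psi.\<close>
definition cliff :: "nat \<Rightarrow> spinor \<Rightarrow> spinor" where
  "cliff i \<psi> = (\<lambda>k. - (\<Sum>j<8. oct_c (Suc i) j k * \<psi> j))"

definition sp_inner :: "spinor \<Rightarrow> spinor \<Rightarrow> real" where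
  "sp_inner \<psi> \<phi> = (\<Sum>k<8. \<psi> k * \<phi> k)"

definition sp_zero :: "spinor \<Rightarrow> bool" where
  "sp_zero \<psi> \<longleftrightarrow> (\<forall>k<8. \<psi> k = 0)"

definition cliff_list :: "nat list \<Rightarrow> spinor \<Rightarrow> spinor" where
  "cliff_list I \<psi> = foldr cliff I \<psi>"

definition incr_lists :: "nat \<Rightarrow> nat list set" where
  "incr_lists k = {I. sorted_wrt (<) I \<and> length I = k \<and> set I \<subseteq> {..<7}}"

definition vec_act :: "vec7 \<Rightarrow> spinor \<Rightarrow> spinor" where
  "vec_act X \<psi> = (\<lambda>k. \<Sum>i<7. X i * cliff i \<psi> k)"

definition form_act :: "nat \<Rightarrow> form \<Rightarrow> spinor \<Rightarrow> spinor" where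
  "form_act k F \<psi> = (\<lambda>m. \<Sum>I\<in>incr_lists k. F I * cliff_list I \<psi> m)"

definition interior :: "vec7 \<Rightarrow> form \<Rightarrow> form" where
  "interior X F = (\<lambda>I. \<Sum>i<7. X i * F (i # I))"

definition wedge1 :: "vec7 \<Rightarrow> form \<Rightarrow> form" where
  "wedge1 X F = (\<lambda>I. \<Sum>t<length I. (-1)^t * X (I ! t) * F (take t I @ drop (Suc t) I))"

definition levi :: "nat list \<Rightarrow> real" where
  "levi xs = (if length xs = 7 \<and> distinct xs \<and> set xs = {..<7}
     then (-1) ^ card {(i,j). i < j \<and> j < length xs \<and> xs ! j < xs ! i} else 0)"

definition hodge :: "nat \<Rightarrow> form \<Rightarrow> form" where
  "hodge k \<alpha> = (\<lambda>J. \<Sum>I\<in>incr_lists k. \<alpha> I * levi (I @ J))"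

definition omega3 :: "spinor \<Rightarrow> form" where
  "omega3 \<Psi> = (\<lambda>I. - sp_inner (cliff_list I \<Psi>) \<Psi>)"

definition admissible :: "real \<Rightarrow> real \<Rightarrow> spinor \<Rightarrow> form \<Rightarrow> form \<Rightarrow> bool" where
  "admissible p q \<Psi> T F \<longleftrightarrow>
     (\<forall>X :: vec7. sp_zero (\<lambda>m. vec_act X \<Psi> m
         + 1/4 * form_act 2 (interior X T) \<Psi> m
         + p * form_act 3 (interior X F) \<Psi> m
         + q * form_act 5 (wedge1 X F) \<Psi> m))"

end

theory Submission
  imports Defs
begin

(* For a unit spinor Psi, the three contractions of omega^3 and *omega^3 with a vector X act on
   Psi as multiples of Clifford multiplication by X:
     (X _| omega^3).Psi = 3 X.Psi,   (X _| *omega^3).Psi = 4 X.Psi,   (X ^ *omega^3).Psi = -3 X.Psi.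
   So for T = a omega^3 and F = f *omega^3 the admissibility equation reads
   (1 + 3a/4 + 4pf - 3qf) X.Psi = 0, and as Clifford multiplication by a unit vector is an
   isometry, the coefficient has to vanish.  The three identities are cubic polynomial identities
   in the components of Psi and are checked on basis vectors in the octonionic realization of
   Delta_7; the Hodge star only has to be tabulated on sorted index lists, because the
   Levi-Civita symbol is alternating. *)

fun incr_lists_from :: "nat \<Rightarrow> nat \<Rightarrow> nat list list" where
  "incr_lists_from n 0 = [[]]"
| "incr_lists_from n (Suc k) = List.bind [n..<7] (\<lambda>x. map ((#) x) (incr_lists_from (Suc x) k))"

lemma set_incr_lists_from:
  "set (incr_lists_from n k) = {I. sorted_wrt (<) I \<and> length I = k \<and> set I \<subseteq> {n..<7}}"
proof (induction k arbitrary: n)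
  case 0
  then show ?case by auto
next
  case (Suc k)
  show ?case
  proof (intro set_eqI iffI)
    fix I assume "I \<in> set (incr_lists_from n (Suc k))"
    then show "I \<in> {I. sorted_wrt (<) I \<and> length I = Suc k \<and> set I \<subseteq> {n..<7}}"
      using Suc by (fastforce simp: set_list_bind)
  next
    fix I assume "I \<in> {I. sorted_wrt (<) I \<and> length I = Suc k \<and> set I \<subseteq> {n..<7}}"
    then obtain x J where I: "I = x # J" and x: "n \<le> x" "x < 7"
      and "sorted_wrt (<) J" "length J = k" "set J \<subseteq> {Suc x..<7}"
      by (cases I) (auto simp: Suc_le_eq subset_iff)
    then have "J \<in> set (incr_lists_from (Suc x) k)"
      using Suc by simp
    then show "I \<in> set (incr_lists_from n (Suc k))"
      using I x by (auto simp: set_list_bind)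
  qed
qed

lemma distinct_incr_lists_from: "distinct (incr_lists_from n k)"
proof (induction k arbitrary: n)
  case 0
  then show ?case by simp
next
  case (Suc k)
  have "disjoint_family_on (set \<circ> (\<lambda>x. map ((#) x) (incr_lists_from (Suc x) k))) (set [n..<7])"
    by (auto simp: disjoint_family_on_def)
  then show ?case
    using Suc by (auto intro: distinct_list_bind simp: distinct_map)
qed

lemma sum_incr_lists:
  "(\<Sum>I\<in>incr_lists k. g I) = (\<Sum>I\<leftarrow>incr_lists_from 0 k. g I)"
proof -
  have "incr_lists k = set (incr_lists_from 0 k)"
    by (auto simp: incr_lists_def set_incr_lists_from)
  then show ?thesis
    by (simp add: sum_list_distinct_conv_sum_set distinct_incr_lists_from)
qed

lemma incr_lists_from_0_2:
  "incr_lists_from 0 2 =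
    [[0, 1], [0, 2], [0, 3], [0, 4], [0, 5], [0, 6], [1, 2],
     [1, 3], [1, 4], [1, 5], [1, 6], [2, 3], [2, 4], [2, 5],
     [2, 6], [3, 4], [3, 5], [3, 6], [4, 5], [4, 6], [5, 6]]"
  by (simp add: numeral_eq_Suc upt_conv_Cons)

lemma incr_lists_from_0_3:
  "incr_lists_from 0 3 =
    [[0, 1, 2], [0, 1, 3], [0, 1, 4], [0, 1, 5], [0, 1, 6],
     [0, 2, 3], [0, 2, 4], [0, 2, 5], [0, 2, 6], [0, 3, 4],
     [0, 3, 5], [0, 3, 6], [0, 4, 5], [0, 4, 6], [0, 5, 6],
     [1, 2, 3], [1, 2, 4], [1, 2, 5], [1, 2, 6], [1, 3, 4],
     [1, 3, 5], [1, 3, 6], [1, 4, 5], [1, 4, 6], [1, 5, 6],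
     [2, 3, 4], [2, 3, 5], [2, 3, 6], [2, 4, 5], [2, 4, 6],
     [2, 5, 6], [3, 4, 5], [3, 4, 6], [3, 5, 6], [4, 5, 6]]"
  by (simp add: numeral_eq_Suc upt_conv_Cons)

lemma incr_lists_from_0_5:
  "incr_lists_from 0 5 =
    [[0, 1, 2, 3, 4], [0, 1, 2, 3, 5], [0, 1, 2, 3, 6], [0, 1, 2, 4, 5],
     [0, 1, 2, 4, 6], [0, 1, 2, 5, 6], [0, 1, 3, 4, 5], [0, 1, 3, 4, 6],
     [0, 1, 3, 5, 6], [0, 1, 4, 5, 6], [0, 2, 3, 4, 5], [0, 2, 3, 4, 6],
     [0, 2, 3, 5, 6], [0, 2, 4, 5, 6], [0, 3, 4, 5, 6], [1, 2, 3, 4, 5],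
     [1, 2, 3, 4, 6], [1, 2, 3, 5, 6], [1, 2, 4, 5, 6], [1, 3, 4, 5, 6],
     [2, 3, 4, 5, 6]]"
  by (simp add: numeral_eq_Suc upt_conv_Cons)

section \<open>The Levi-Civita symbol is alternating\<close>

definition inversions :: "nat list \<Rightarrow> (nat \<times> nat) set" where
  "inversions xs = {(i, j). i < j \<and> j < length xs \<and> xs ! j < xs ! i}"

lemma inversions_Nil [simp]: "inversions [] = {}"
  by (simp add: inversions_def)

lemma card_inversions_Cons [simp]:
  "card (inversions (x # xs)) = length (filter (\<lambda>y. y < x) xs) + card (inversions xs)"
proof -
  have decomp: "inversions (x # xs)
      = Pair 0 ` Suc ` {j. j < length xs \<and> xs ! j < x} \<union> map_prod Suc Suc ` inversions xs"
  proof (intro set_eqI iffI)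
    fix p assume "p \<in> inversions (x # xs)"
    then obtain i j where p: "p = (i, j)" "i < j" "j < Suc (length xs)" "(x # xs) ! j < (x # xs) ! i"
      by (auto simp: inversions_def)
    moreover obtain j' where "j = Suc j'"
      using p(2) gr0_conv_Suc by blast
    ultimately show
      "p \<in> Pair 0 ` Suc ` {j. j < length xs \<and> xs ! j < x} \<union> map_prod Suc Suc ` inversions xs"
      by (cases i) (auto simp: inversions_def image_iff)
  next
    fix p
    assume "p \<in> Pair 0 ` Suc ` {j. j < length xs \<and> xs ! j < x} \<union> map_prod Suc Suc ` inversions xs"
    then show "p \<in> inversions (x # xs)"
      by (auto simp: inversions_def)
  qed
  have "finite (inversions xs)"
    by (rule finite_subset[of _ "{..<length xs} \<times> {..<length xs}"]) (auto simp: inversions_def)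
  moreover have "card (map_prod Suc Suc ` inversions xs) = card (inversions xs)"
    by (rule card_image) (metis map_prod_inj_on inj_Suc UNIV_Times_UNIV inj_on_subset subset_UNIV)
  moreover have "card (Pair 0 ` Suc ` A) = card A" for A
    by (simp add: card_image inj_on_def)
  ultimately have "card (inversions (x # xs))
      = card {j. j < length xs \<and> xs ! j < x} + card (inversions xs)"
    unfolding decomp by (subst card_Un_disjoint) auto
  then show ?thesis
    by (simp add: length_filter_conv_card)
qed

lemma card_inversions_swap:
  "card (inversions (xs @ b # a # ys)) + (if b < a then 1 else 0)
     = card (inversions (xs @ a # b # ys)) + (if a < b then 1 else 0)"
  by (induction xs) auto

lemma levi_swap: "levi (xs @ b # a # ys) = - levi (xs @ a # b # ys)"
proof (cases "a = b")
  case True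
  then show ?thesis by (simp add: levi_def)
next
  case False
  then have "odd (card (inversions (xs @ b # a # ys)) + card (inversions (xs @ a # b # ys)))"
    using card_inversions_swap[of xs b a ys] by (cases "a < b") (auto, presburger+)
  then show ?thesis
    unfolding levi_def inversions_def[symmetric] by (auto simp: minus_one_power_iff)
qed

lemma levi_conv_inversions:
  "levi xs = (if length xs = 7 \<and> distinct xs \<and> set xs \<subseteq> {..<7}
     then (-1) ^ card (inversions xs) else 0)"
proof (cases "length xs = 7 \<and> distinct xs")
  case True
  then have "set xs = {..<7} \<longleftrightarrow> set xs \<subseteq> {..<7}"
    using card_subset_eq[of "{..<7::nat}" "set xs"] by (auto simp: distinct_card)
  then show ?thesis
    using True by (simp add: levi_def inversions_def)
next
  case False
  then show ?thesis
    by (auto simp: levi_def)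
qed

lemma hodge_swap: "hodge k \<alpha> (xs @ b # a # ys) = - hodge k \<alpha> (xs @ a # b # ys)"
  using levi_swap[of "_ @ xs" b a ys] by (simp add: hodge_def sum_negf)

(* The hypotheses only orient the rules, so that simp sorts the argument list. *)
lemma hodge_Cons_swap [simp]:
  "b < a \<Longrightarrow> hodge k \<alpha> (a # b # J) = - hodge k \<alpha> (b # a # J)"
  "b < a \<Longrightarrow> hodge k \<alpha> (x # a # b # J) = - hodge k \<alpha> (x # b # a # J)"
  "b < a \<Longrightarrow> hodge k \<alpha> (x # y # a # b # J) = - hodge k \<alpha> (x # y # b # a # J)"
  using hodge_swap[of k \<alpha> "[]" a b J] hodge_swap[of k \<alpha> "[x]" a b J]
    hodge_swap[of k \<alpha> "[x, y]" a b J]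
  by simp_all

lemma hodge_non_distinct [simp]: "\<not> distinct J \<Longrightarrow> hodge k \<alpha> J = 0"
  by (simp add: hodge_def levi_def)

lemma hodge_3_table [simp]:
  "hodge 3 \<alpha> [0, 1, 2, 3] = \<alpha> [4, 5, 6]"  "hodge 3 \<alpha> [0, 1, 2, 4] = - \<alpha> [3, 5, 6]"
  "hodge 3 \<alpha> [0, 1, 2, 5] = \<alpha> [3, 4, 6]"  "hodge 3 \<alpha> [0, 1, 2, 6] = - \<alpha> [3, 4, 5]"
  "hodge 3 \<alpha> [0, 1, 3, 4] = \<alpha> [2, 5, 6]"  "hodge 3 \<alpha> [0, 1, 3, 5] = - \<alpha> [2, 4, 6]"
  "hodge 3 \<alpha> [0, 1, 3, 6] = \<alpha> [2, 4, 5]"  "hodge 3 \<alpha> [0, 1, 4, 5] = \<alpha> [2, 3, 6]"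
  "hodge 3 \<alpha> [0, 1, 4, 6] = - \<alpha> [2, 3, 5]"  "hodge 3 \<alpha> [0, 1, 5, 6] = \<alpha> [2, 3, 4]"
  "hodge 3 \<alpha> [0, 2, 3, 4] = - \<alpha> [1, 5, 6]"  "hodge 3 \<alpha> [0, 2, 3, 5] = \<alpha> [1, 4, 6]"
  "hodge 3 \<alpha> [0, 2, 3, 6] = - \<alpha> [1, 4, 5]"  "hodge 3 \<alpha> [0, 2, 4, 5] = - \<alpha> [1, 3, 6]"
  "hodge 3 \<alpha> [0, 2, 4, 6] = \<alpha> [1, 3, 5]"  "hodge 3 \<alpha> [0, 2, 5, 6] = - \<alpha> [1, 3, 4]"
  "hodge 3 \<alpha> [0, 3, 4, 5] = \<alpha> [1, 2, 6]"  "hodge 3 \<alpha> [0, 3, 4, 6] = - \<alpha> [1, 2, 5]"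
  "hodge 3 \<alpha> [0, 3, 5, 6] = \<alpha> [1, 2, 4]"  "hodge 3 \<alpha> [0, 4, 5, 6] = - \<alpha> [1, 2, 3]"
  "hodge 3 \<alpha> [1, 2, 3, 4] = \<alpha> [0, 5, 6]"  "hodge 3 \<alpha> [1, 2, 3, 5] = - \<alpha> [0, 4, 6]"
  "hodge 3 \<alpha> [1, 2, 3, 6] = \<alpha> [0, 4, 5]"  "hodge 3 \<alpha> [1, 2, 4, 5] = \<alpha> [0, 3, 6]"
  "hodge 3 \<alpha> [1, 2, 4, 6] = - \<alpha> [0, 3, 5]"  "hodge 3 \<alpha> [1, 2, 5, 6] = \<alpha> [0, 3, 4]"
  "hodge 3 \<alpha> [1, 3, 4, 5] = - \<alpha> [0, 2, 6]"  "hodge 3 \<alpha> [1, 3, 4, 6] = \<alpha> [0, 2, 5]"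
  "hodge 3 \<alpha> [1, 3, 5, 6] = - \<alpha> [0, 2, 4]"  "hodge 3 \<alpha> [1, 4, 5, 6] = \<alpha> [0, 2, 3]"
  "hodge 3 \<alpha> [2, 3, 4, 5] = \<alpha> [0, 1, 6]"  "hodge 3 \<alpha> [2, 3, 4, 6] = - \<alpha> [0, 1, 5]"
  "hodge 3 \<alpha> [2, 3, 5, 6] = \<alpha> [0, 1, 4]"  "hodge 3 \<alpha> [2, 4, 5, 6] = - \<alpha> [0, 1, 3]"
  "hodge 3 \<alpha> [3, 4, 5, 6] = \<alpha> [0, 1, 2]"
  by (simp_all add: hodge_def sum_incr_lists incr_lists_from_0_3 levi_conv_inversions del: One_nat_def)

section \<open>Clifford multiplication in the octonionic realization\<close>

lemma cliff_table [simp]: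
  "cliff 0 \<psi> 0 = \<psi> 1"   "cliff 0 \<psi> 1 = - \<psi> 0" "cliff 0 \<psi> 2 = \<psi> 3"   "cliff 0 \<psi> 3 = - \<psi> 2"
  "cliff 0 \<psi> 4 = \<psi> 5"   "cliff 0 \<psi> 5 = - \<psi> 4" "cliff 0 \<psi> 6 = - \<psi> 7" "cliff 0 \<psi> 7 = \<psi> 6"
  "cliff 1 \<psi> 0 = \<psi> 2"   "cliff 1 \<psi> 1 = - \<psi> 3" "cliff 1 \<psi> 2 = - \<psi> 0" "cliff 1 \<psi> 3 = \<psi> 1"
  "cliff 1 \<psi> 4 = \<psi> 6"   "cliff 1 \<psi> 5 = \<psi> 7"   "cliff 1 \<psi> 6 = - \<psi> 4" "cliff 1 \<psi> 7 = - \<psi> 5"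
  "cliff 2 \<psi> 0 = \<psi> 3"   "cliff 2 \<psi> 1 = \<psi> 2"   "cliff 2 \<psi> 2 = - \<psi> 1" "cliff 2 \<psi> 3 = - \<psi> 0"
  "cliff 2 \<psi> 4 = \<psi> 7"   "cliff 2 \<psi> 5 = - \<psi> 6" "cliff 2 \<psi> 6 = \<psi> 5"   "cliff 2 \<psi> 7 = - \<psi> 4"
  "cliff 3 \<psi> 0 = \<psi> 4"   "cliff 3 \<psi> 1 = - \<psi> 5" "cliff 3 \<psi> 2 = - \<psi> 6" "cliff 3 \<psi> 3 = - \<psi> 7"
  "cliff 3 \<psi> 4 = - \<psi> 0" "cliff 3 \<psi> 5 = \<psi> 1"   "cliff 3 \<psi> 6 = \<psi> 2"   "cliff 3 \<psi> 7 = \<psi> 3"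
  "cliff 4 \<psi> 0 = \<psi> 5"   "cliff 4 \<psi> 1 = \<psi> 4"   "cliff 4 \<psi> 2 = - \<psi> 7" "cliff 4 \<psi> 3 = \<psi> 6"
  "cliff 4 \<psi> 4 = - \<psi> 1" "cliff 4 \<psi> 5 = - \<psi> 0" "cliff 4 \<psi> 6 = - \<psi> 3" "cliff 4 \<psi> 7 = \<psi> 2"
  "cliff 5 \<psi> 0 = \<psi> 6"   "cliff 5 \<psi> 1 = \<psi> 7"   "cliff 5 \<psi> 2 = \<psi> 4"   "cliff 5 \<psi> 3 = - \<psi> 5"
  "cliff 5 \<psi> 4 = - \<psi> 2" "cliff 5 \<psi> 5 = \<psi> 3"   "cliff 5 \<psi> 6 = - \<psi> 0" "cliff 5 \<psi> 7 = - \<psi> 1"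
  "cliff 6 \<psi> 0 = \<psi> 7"   "cliff 6 \<psi> 1 = - \<psi> 6" "cliff 6 \<psi> 2 = \<psi> 5"   "cliff 6 \<psi> 3 = \<psi> 4"
  "cliff 6 \<psi> 4 = - \<psi> 3" "cliff 6 \<psi> 5 = - \<psi> 2" "cliff 6 \<psi> 6 = \<psi> 1"   "cliff 6 \<psi> 7 = - \<psi> 0"
  by (simp_all add: cliff_def oct_c_def fano_def numeral_eq_Suc lessThan_Suc)

lemma sum_lessThan_5: "(\<Sum>k<(5::nat). g k) = g 0 + g 1 + g 2 + g 3 + (g 4 :: real)"
  by (simp add: numeral_eq_Suc lessThan_Suc)

lemma sum_lessThan_8: "(\<Sum>k<(8::nat). g k) = g 0 + g 1 + g 2 + g 3 + g 4 + g 5 + g 6 + (g 7 :: real)"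
  by (simp add: numeral_eq_Suc lessThan_Suc)

lemma less_7_cases:
  assumes "i < (7::nat)"
  obtains "i = 0" | "i = 1" | "i = 2" | "i = 3" | "i = 4" | "i = 5" | "i = 6"
  using assms by arith

lemma less_8_cases:
  assumes "m < (8::nat)"
  obtains "m = 0" | "m = 1" | "m = 2" | "m = 3" | "m = 4" | "m = 5" | "m = 6" | "m = 7"
  using assms by arith

lemma sp_inner_cliff:
  assumes "i < 7"
  shows "sp_inner (cliff i \<psi>) (cliff i \<psi>) = sp_inner \<psi> \<psi>"
  using assms by (elim less_7_cases) (simp_all add: sp_inner_def sum_lessThan_8 del: One_nat_def)

section \<open>Contracting forms with a vector\<close>

definition basis_vec :: "nat \<Rightarrow> vec7" where
  "basis_vec i = (\<lambda>j. if j = i then 1 else 0)"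

lemma interior_basis_vec [simp]: "i < 7 \<Longrightarrow> interior (basis_vec i) F I = F (i # I)"
  by (simp add: interior_def basis_vec_def if_distrib[of "\<lambda>c. c * _"] cong: if_cong)

lemma vec_act_basis_vec [simp]: "i < 7 \<Longrightarrow> vec_act (basis_vec i) \<psi> = cliff i \<psi>"
  by (simp add: vec_act_def basis_vec_def if_distrib[of "\<lambda>c. c * _"] cong: if_cong)

lemma interior_expand: "interior X F I = (\<Sum>i<7. X i * interior (basis_vec i) F I)"
  unfolding interior_def[of X] by (rule sum.cong) simp_all

lemma wedge1_expand:
  assumes "set I \<subseteq> {..<7}"
  shows "wedge1 X F I = (\<Sum>i<7. X i * wedge1 (basis_vec i) F I)"
proof -
  have "X (I ! t) = (\<Sum>i<7. X i * basis_vec i (I ! t))" if "t < length I" for t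
  proof -
    have "I ! t < 7"
      using assms nth_mem[OF that] by auto
    then show ?thesis
      by (simp add: basis_vec_def if_distrib[of "\<lambda>c. _ * c"] cong: if_cong)
  qed
  then have "wedge1 X F I
      = (\<Sum>t<length I. \<Sum>i<7. X i * ((-1) ^ t * basis_vec i (I ! t) * F (take t I @ drop (Suc t) I)))"
    unfolding wedge1_def by (intro sum.cong) (simp_all add: sum_distrib_left sum_distrib_right mult_ac)
  also have "\<dots> = (\<Sum>i<7. X i * wedge1 (basis_vec i) F I)"
    unfolding wedge1_def by (subst sum.swap) (simp add: sum_distrib_left)
  finally show ?thesis .
qed

lemma form_act_sum:
  "form_act k (\<lambda>I. \<Sum>i\<in>A. c i * G i I) \<psi> m = (\<Sum>i\<in>A. c i * form_act k (G i) \<psi> m)"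
  unfolding form_act_def
  by (simp add: sum_distrib_left sum_distrib_right mult_ac sum.swap[of _ A])

lemma form_act_cong:
  "(\<And>I. I \<in> incr_lists k \<Longrightarrow> F I = G I) \<Longrightarrow> form_act k F \<psi> = form_act k G \<psi>"
  unfolding form_act_def by (auto intro: sum.cong)

lemma form_act_scale: "form_act k (\<lambda>I. c * F I) \<psi> m = c * form_act k F \<psi> m"
  unfolding form_act_def by (simp add: sum_distrib_left mult.assoc)

lemma interior_scale: "interior X (\<lambda>I. c * F I) = (\<lambda>I. c * interior X F I)"
  unfolding interior_def by (simp add: sum_distrib_left mult_ac)

lemma wedge1_scale: "wedge1 X (\<lambda>I. c * F I) = (\<lambda>I. c * wedge1 X F I)"
  unfolding wedge1_def by (simp add: sum_distrib_left mult_ac)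

lemma form_act_interior_eq_vec_act:
  assumes "\<And>i. i < 7 \<Longrightarrow> form_act k (interior (basis_vec i) F) \<psi> m = c * cliff i \<psi> m"
  shows "form_act k (interior X F) \<psi> m = c * vec_act X \<psi> m"
proof -
  have "form_act k (interior X F) \<psi> m = (\<Sum>i<7. X i * form_act k (interior (basis_vec i) F) \<psi> m)"
    by (subst interior_expand[abs_def]) (rule form_act_sum)
  also have "\<dots> = (\<Sum>i<7. X i * (c * cliff i \<psi> m))"
    using assms by (intro sum.cong) simp_all
  finally show ?thesis
    by (simp add: vec_act_def sum_distrib_left mult_ac)
qed

lemma form_act_wedge1_eq_vec_act:
  assumes "\<And>i. i < 7 \<Longrightarrow> form_act k (wedge1 (basis_vec i) F) \<psi> m = c * cliff i \<psi> m"
  shows "form_act k (wedge1 X F) \<psi> m = c * vec_act X \<psi> m"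
proof -
  have "form_act k (wedge1 X F) \<psi> = form_act k (\<lambda>I. \<Sum>i<7. X i * wedge1 (basis_vec i) F I) \<psi>"
    by (rule form_act_cong) (simp add: wedge1_expand incr_lists_def)
  then have "form_act k (wedge1 X F) \<psi> m = (\<Sum>i<7. X i * form_act k (wedge1 (basis_vec i) F) \<psi> m)"
    by (simp add: form_act_sum)
  also have "\<dots> = (\<Sum>i<7. X i * (c * cliff i \<psi> m))"
    using assms by (intro sum.cong) simp_all
  finally show ?thesis
    by (simp add: vec_act_def sum_distrib_left mult_ac)
qed

(* One_nat_def is dropped
   because it would turn the numeral 1 of cliff_table into Suc 0; hypsubst_thin removes the
   hypotheses i = _ and m = _, which algebra cannot cope with. *)
lemma form_act_interior_basis_omega3:
  assumes "i < 7" "m < 8"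
  shows "form_act 2 (interior (basis_vec i) (omega3 \<Psi>)) \<Psi> m
    = 3 * sp_inner \<Psi> \<Psi> * cliff i \<Psi> m"
  using assms
  by (elim less_7_cases less_8_cases; hypsubst_thin;
      simp add: form_act_def sum_incr_lists incr_lists_from_0_2 omega3_def sp_inner_def
        cliff_list_def sum_lessThan_8 del: One_nat_def;
      algebra)

lemma form_act_interior_basis_hodge_omega3:
  assumes "i < 7" "m < 8"
  shows "form_act 3 (interior (basis_vec i) (hodge 3 (omega3 \<Psi>))) \<Psi> m
    = 4 * sp_inner \<Psi> \<Psi> * cliff i \<Psi> m"
  using assms
  by (elim less_7_cases less_8_cases; hypsubst_thin;
      simp add: form_act_def sum_incr_lists incr_lists_from_0_3 omega3_def sp_inner_def
        cliff_list_def sum_lessThan_8 del: One_nat_def;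
      algebra)

lemma form_act_wedge1_basis_hodge_omega3:
  assumes "i < 7" "m < 8"
  shows "form_act 5 (wedge1 (basis_vec i) (hodge 3 (omega3 \<Psi>))) \<Psi> m
    = -3 * sp_inner \<Psi> \<Psi> * cliff i \<Psi> m"
  using assms
  by (elim less_7_cases less_8_cases; hypsubst_thin;
      simp add: form_act_def sum_incr_lists incr_lists_from_0_5 wedge1_def sum_lessThan_5
        basis_vec_def omega3_def sp_inner_def cliff_list_def sum_lessThan_8 del: One_nat_def;
      algebra)

lemma form_act_interior_omega3:
  "m < 8 \<Longrightarrow> form_act 2 (interior X (omega3 \<Psi>)) \<Psi> m = 3 * sp_inner \<Psi> \<Psi> * vec_act X \<Psi> m"
  by (rule form_act_interior_eq_vec_act) (rule form_act_interior_basis_omega3)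

lemma form_act_interior_hodge_omega3:
  "m < 8 \<Longrightarrow>
    form_act 3 (interior X (hodge 3 (omega3 \<Psi>))) \<Psi> m = 4 * sp_inner \<Psi> \<Psi> * vec_act X \<Psi> m"
  by (rule form_act_interior_eq_vec_act) (rule form_act_interior_basis_hodge_omega3)

lemma form_act_wedge1_hodge_omega3:
  "m < 8 \<Longrightarrow>
    form_act 5 (wedge1 X (hodge 3 (omega3 \<Psi>))) \<Psi> m = -3 * sp_inner \<Psi> \<Psi> * vec_act X \<Psi> m"
  by (rule form_act_wedge1_eq_vec_act) (rule form_act_wedge1_basis_hodge_omega3)

lemma spinor_equation_omega3:
  assumes "m < 8"
  shows "vec_act X \<Psi> m
      + 1/4 * form_act 2 (interior X (\<lambda>I. a * omega3 \<Psi> I)) \<Psi> m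
      + p * form_act 3 (interior X (\<lambda>I. f * hodge 3 (omega3 \<Psi>) I)) \<Psi> m
      + q * form_act 5 (wedge1 X (\<lambda>I. f * hodge 3 (omega3 \<Psi>) I)) \<Psi> m
    = (1 + (3 * a / 4 + 4 * p * f - 3 * q * f) * sp_inner \<Psi> \<Psi>) * vec_act X \<Psi> m"
  using assms
  by (simp add: interior_scale wedge1_scale form_act_scale form_act_interior_omega3
      form_act_interior_hodge_omega3 form_act_wedge1_hodge_omega3 algebra_simps)

lemma admissible_omega3_iff:
  assumes unit: "sp_inner \<Psi> \<Psi> = 1"
  shows "admissible p q \<Psi> (\<lambda>I. a * omega3 \<Psi> I) (\<lambda>I. f * hodge 3 (omega3 \<Psi>) I)
    \<longleftrightarrow> 3 * a / 4 + 4 * p * f - 3 * q * f = -1"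
    (is "?adm \<longleftrightarrow> ?c = -1")
proof -
  have adm: "?adm \<longleftrightarrow> (\<forall>X. \<forall>m<8. (1 + ?c) * vec_act X \<Psi> m = 0)"
    unfolding admissible_def sp_zero_def
    by (simp only: spinor_equation_omega3 unit mult_1_right cong: imp_cong)
  have "\<exists>m<8. cliff 0 \<Psi> m \<noteq> 0"
  proof (rule ccontr)
    assume "\<not> ?thesis"
    then have "sp_inner (cliff 0 \<Psi>) (cliff 0 \<Psi>) = 0"
      by (simp add: sp_inner_def)
    with sp_inner_cliff[of 0 \<Psi>] unit show False
      by simp
  qed
  then have "(\<forall>X. \<forall>m<8. (1 + ?c) * vec_act X \<Psi> m = 0) \<longleftrightarrow> 1 + ?c = 0"
    by (metis mult_eq_0_iff vec_act_basis_vec zero_less_numeral)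
  with adm show ?thesis
    by (simp add: add_eq_0_iff)
qed

theorem mainTheorem4:
  fixes p q :: real and \<Psi> :: spinor
  assumes unit: "sp_inner \<Psi> \<Psi> = 1"
  shows "(\<forall>a f :: real.
            admissible p q \<Psi> (\<lambda>I. a * omega3 \<Psi> I) (\<lambda>I. f * hodge 3 (omega3 \<Psi>) I)
            \<longleftrightarrow> a = (12 * q - 16 * p) * f / 3 - 4 / 3)
       \<and> (4 * p - 3 * q = 0 \<longrightarrow>
            (\<forall>a f :: real.
              admissible p q \<Psi> (\<lambda>I. a * omega3 \<Psi> I) (\<lambda>I. f * hodge 3 (omega3 \<Psi>) I)
              \<longleftrightarrow> a = - 4 / 3))"
proof -
  have family: "admissible p q \<Psi> (\<lambda>I. a * omega3 \<Psi> I) (\<lambda>I. f * hodge 3 (omega3 \<Psi>) I)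
      \<longleftrightarrow> a = (12 * q - 16 * p) * f / 3 - 4 / 3" for a f
    unfolding admissible_omega3_iff[OF unit] by (auto simp: field_simps)
  moreover have "(12 * q - 16 * p) * f / 3 - 4 / 3 = - 4 / 3" if "4 * p - 3 * q = 0" for f
  proof -
    from that have "12 * q - 16 * p = 0"
      by linarith
    then show ?thesis
      by simp
  qed
  ultimately show ?thesis
    by metis
qed

end
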